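(* Under the hypotheses and notation of the following setting: $\mathcal{M}$ is a reversible, ergodic Markov chain on finite $\Omega$, $N=|\Omega|$, transition matrix $P$, stationary distribution $\pi$, eigenvalues $1=\lambda_0>\lambda_1\geq\cdots\geq\lambda_{N-1}\geq-1$, underlying graph $\mathcal{G}=(\Omega,\Gamma)$ with $\{x,y\}\in\Gamma$ iff $P(x,y)>0$, $Q(x,y)=\pi(x)P(x,y)$, and $\Sigma=\{\sigma_x:x\in\Omega\}$ a choice of cycles $\sigma_x$ in $\mathcal{G}$ from $x$ to $x$ of odd length $|\sigma_x|$. Define \[ \eta'(\Sigma)=\max_{e\in\Gamma}\frac{1}{Q(e)}\sum_{x\in\Omega:\,e\in\sigma_x}\pi(x),\qquad \ell(\Sigma)=\max_{x\in\Omega}|\sigma_x|. \] Then $(1+\lambda_{N-1})^{-1}\leq \eta'(\Sigma)\,\ell(\Sigma)/2$. In particular, if $\ell(\Sigma)=1$ (so every $\sigma_x$ is a self-loop, i.e. $P(x,x)>0$ for all $x$), then $(1+\lambda_{N-1})^{-1}\leq \tfrac12\max_{x\in\Omega}P(x,x)^{-1}$.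
   Context: A 1-cycle is a walk along a self-loop edge $\{x,x\}$, present when $P(x,x)>0$. *)

theory Defs
  imports Complex_Main
begin

definition stochastic :: "('a::finite \<Rightarrow> 'a \<Rightarrow> real) \<Rightarrow> bool" where
  "stochastic P \<longleftrightarrow> (\<forall>x y. P x y \<ge> 0) \<and> (\<forall>x. (\<Sum>y\<in>UNIV. P x y) = 1)"

definition prob_dist :: "('a::finite \<Rightarrow> real) \<Rightarrow> bool" where
  "prob_dist \<pi> \<longleftrightarrow> (\<forall>x. \<pi> x \<ge> 0) \<and> (\<Sum>x\<in>UNIV. \<pi> x) = 1"

definition stationary :: "('a::finite \<Rightarrow> 'a \<Rightarrow> real) \<Rightarrow> ('a \<Rightarrow> real) \<Rightarrow> bool" where
  "stationary P \<pi> \<longleftrightarrow> (\<forall>y. (\<Sum>x\<in>UNIV. \<pi> x * P x y) = \<pi> y)"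

definition reversible :: "('a \<Rightarrow> 'a \<Rightarrow> real) \<Rightarrow> ('a \<Rightarrow> real) \<Rightarrow> bool" where
  "reversible P \<pi> \<longleftrightarrow> (\<forall>x y. \<pi> x * P x y = \<pi> y * P y x)"

fun mpow :: "('a::finite \<Rightarrow> 'a \<Rightarrow> real) \<Rightarrow> nat \<Rightarrow> 'a \<Rightarrow> 'a \<Rightarrow> real" where
  "mpow P 0 = (\<lambda>x y. if x = y then 1 else 0)"
| "mpow P (Suc n) = (\<lambda>x y. \<Sum>z\<in>UNIV. mpow P n x z * P z y)"

definition irreducible_chain :: "('a::finite \<Rightarrow> 'a \<Rightarrow> real) \<Rightarrow> bool" where
  "irreducible_chain P \<longleftrightarrow> (\<forall>x y. \<exists>n. mpow P n x y > 0)"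

definition aperiodic_chain :: "('a::finite \<Rightarrow> 'a \<Rightarrow> real) \<Rightarrow> bool" where
  "aperiodic_chain P \<longleftrightarrow> (\<forall>x. Gcd {n. n \<ge> 1 \<and> mpow P n x x > 0} = 1)"

definition ergodic_chain :: "('a::finite \<Rightarrow> 'a \<Rightarrow> real) \<Rightarrow> bool" where
  "ergodic_chain P \<longleftrightarrow> irreducible_chain P \<and> aperiodic_chain P"

text \<open>Eigenvalues of P (acting on functions 'a => real); for a reversible chain all
  eigenvalues are real. lambda_min P is the smallest eigenvalue lambda_{N-1}.\<close>
definition eigenvalues :: "('a::finite \<Rightarrow> 'a \<Rightarrow> real) \<Rightarrow> real set" where
  "eigenvalues P = {mu. \<exists>v::'a \<Rightarrow> real. v \<noteq> (\<lambda>_. 0) \<and> (\<forall>x. (\<Sum>y\<in>UNIV. P x y * v y) = mu * v x)}"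

definition lambda_min :: "('a::finite \<Rightarrow> 'a \<Rightarrow> real) \<Rightarrow> real" where
  "lambda_min P = Min (eigenvalues P)"

text \<open>Underlying graph: edges are unordered pairs {x,y} (self-loops {x}) with P x y > 0.\<close>
definition Gamma :: "('a \<Rightarrow> 'a \<Rightarrow> real) \<Rightarrow> 'a set set" where
  "Gamma P = {{x, y} | x y. P x y > 0}"

text \<open>Q(e) = pi(x) P(x,y) for e = {x,y}; well defined by reversibility.\<close>
definition Qedge :: "('a \<Rightarrow> 'a \<Rightarrow> real) \<Rightarrow> ('a \<Rightarrow> real) \<Rightarrow> 'a set \<Rightarrow> real" where
  "Qedge P \<pi> e = (SOME q. \<exists>x y. e = {x, y} \<and> P x y > 0 \<and> q = \<pi> x * P x y)"

definition is_walk :: "('a \<Rightarrow> 'a \<Rightarrow> real) \<Rightarrow> 'a list \<Rightarrow> bool" where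
  "is_walk P vs \<longleftrightarrow> vs \<noteq> [] \<and> (\<forall>i. Suc i < length vs \<longrightarrow> P (vs ! i) (vs ! Suc i) > 0)"

definition walk_len :: "'a list \<Rightarrow> nat" where
  "walk_len vs = length vs - 1"

definition walk_edges :: "'a list \<Rightarrow> 'a set set" where
  "walk_edges vs = {{vs ! i, vs ! Suc i} | i. Suc i < length vs}"

text \<open>A cycle from x to x: closed walk of positive length, no repeated vertex
  except the common endpoint (a 1-cycle is a self-loop).\<close>
definition is_cycle_at :: "('a \<Rightarrow> 'a \<Rightarrow> real) \<Rightarrow> 'a \<Rightarrow> 'a list \<Rightarrow> bool" where
  "is_cycle_at P x vs \<longleftrightarrow> is_walk P vs \<and> length vs \<ge> 2 \<and> hd vs = x \<and> last vs = x
      \<and> distinct (butlast vs)"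

definition eta' :: "('a::finite \<Rightarrow> 'a \<Rightarrow> real) \<Rightarrow> ('a \<Rightarrow> real) \<Rightarrow> ('a \<Rightarrow> 'a list) \<Rightarrow> real" where
  "eta' P \<pi> \<sigma> = Max ((\<lambda>e. (\<Sum>x\<in>{x. e \<in> walk_edges (\<sigma> x)}. \<pi> x) / Qedge P \<pi> e) ` Gamma P)"

definition ell :: "('a::finite \<Rightarrow> 'a list) \<Rightarrow> nat" where
  "ell \<sigma> = Max (range (\<lambda>x. walk_len (\<sigma> x)))"

end

theory Submission
  imports Defs "HOL-Analysis.Analysis"
begin

(* Let v be an eigenvector of P with eigenvalue mu.  For every
   state x, the odd cycle sigma_x = (x = v_0, ..., v_L = x) writes 2 v(x) as an
   alternating sum of the edge terms v(v_i) + v(v_{i+1}); Cauchy-Schwarz gives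
   4 v(x)^2 <= L * sum_i (v(v_i) + v(v_{i+1}))^2.  Since an odd cycle uses each
   edge once, weighting by pi(x) and exchanging the sums bounds 4 ||v||_pi^2 by
   ell * eta' * sum_e Q(e) (v a + v b)^2, and the latter sum is at most the
   quadratic form sum pi(x) P(x,y) (v x + v y)^2 = 2 (1 + mu) ||v||_pi^2.
   Applied to mu = lambda_min this is the first claim; the self-loop case follows
   from the diagonal terms of the same quadratic form. *)

lemma closed_walk_nth_eq:
  assumes dist: "distinct (butlast vs)" and len: "length vs = Suc L" and closed: "vs ! L = vs ! 0"
    and ij: "i \<le> L" "j \<le> L" "vs ! i = vs ! j"
  shows "i = j \<or> {i, j} = {0, L}"
proof -
  have inner: "a = b" if "a < L" "b < L" "vs ! a = vs ! b" for a b
  proof -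
    have "butlast vs ! a = butlast vs ! b" using that len by (simp add: nth_butlast)
    then show ?thesis using dist that len by (simp add: nth_eq_iff_index_eq)
  qed
  consider "i < L" "j < L" | "i = L" "j < L" | "i < L" "j = L" | "i = L" "j = L"
    using ij by linarith
  then show ?thesis
  proof cases
    case 1
    then show ?thesis using inner ij by blast
  next
    case 2
    then have "vs ! 0 = vs ! j" using closed ij by simp
    then have "j = 0" using inner[of 0 j] 2 by simp
    then show ?thesis using 2 by auto
  next
    case 3
    then have "vs ! i = vs ! 0" using closed ij by simp
    then have "i = 0" using inner[of i 0] 3 by simp
    then show ?thesis using 3 by auto
  next
    case 4
    then show ?thesis by simp
  qed
qed

(* Hence a cycle of odd length traverses every edge at most once: the only way
   to reuse an edge is to go back and forth along it, which gives length 2. *)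
lemma odd_closed_walk_edges_inj:
  assumes dist: "distinct (butlast vs)" and len: "length vs = Suc L" and closed: "vs ! L = vs ! 0"
    and odd: "odd L"
  shows "inj_on (\<lambda>i. {vs ! i, vs ! Suc i}) {..<L}"
proof (rule inj_onI)
  fix i j assume i: "i \<in> {..<L}" and j: "j \<in> {..<L}"
    and eq: "{vs ! i, vs ! Suc i} = {vs ! j, vs ! Suc j}"
  have same_vertex: "a = b \<or> (a = 0 \<and> b = L) \<or> (a = L \<and> b = 0)"
    if "a \<le> L" "b \<le> L" "vs ! a = vs ! b" for a b
    using closed_walk_nth_eq[OF dist len closed that] by (auto simp: doubleton_eq_iff)
  from eq consider "vs ! i = vs ! j" | "vs ! i = vs ! Suc j" "vs ! Suc i = vs ! j"
    by (auto simp: doubleton_eq_iff)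
  then show "i = j"
  proof cases
    case 1
    then show ?thesis using same_vertex[of i j] i j by simp
  next
    case 2
    have "i = Suc j \<or> (i = 0 \<and> Suc j = L) \<or> (i = L \<and> Suc j = 0)"
      using same_vertex[of i "Suc j"] 2 i j by simp
    moreover have "Suc i = j \<or> (Suc i = 0 \<and> j = L) \<or> (Suc i = L \<and> j = 0)"
      using same_vertex[of "Suc i" j] 2 i j by simp
    ultimately show ?thesis using odd i j by auto
  qed
qed

lemma cycle_at_endpoints:
  assumes "is_cycle_at P x vs"
  shows "length vs = Suc (walk_len vs)" "vs ! 0 = x" "vs ! walk_len vs = x"
proof -
  have ne: "vs \<noteq> []" "hd vs = x" "last vs = x" using assms unfolding is_cycle_at_def is_walk_def by auto
  then show "length vs = Suc (walk_len vs)" unfolding walk_len_def by simp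
  show "vs ! 0 = x" using ne by (simp add: hd_conv_nth)
  show "vs ! walk_len vs = x" using ne by (simp add: last_conv_nth walk_len_def)
qed

lemma odd_cycle_edge_sum:
  assumes cyc: "is_cycle_at P x vs" and odd: "odd (walk_len vs)"
  shows "(\<Sum>i<walk_len vs. F {vs ! i, vs ! Suc i}) = (\<Sum>e\<in>walk_edges vs. F e)"
proof -
  note ends = cycle_at_endpoints[OF cyc]
  have "inj_on (\<lambda>i. {vs ! i, vs ! Suc i}) {..<walk_len vs}"
    by (rule odd_closed_walk_edges_inj[OF _ ends(1) _ odd])
       (use cyc ends in \<open>auto simp: is_cycle_at_def\<close>)
  moreover have "(\<lambda>i. {vs ! i, vs ! Suc i}) ` {..<walk_len vs} = walk_edges vs"
    using ends(1) unfolding walk_edges_def by auto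
  ultimately show ?thesis using sum.reindex[of "\<lambda>i. {vs ! i, vs ! Suc i}" "{..<walk_len vs}" F] by simp
qed

lemma walk_edges_subset_Gamma:
  assumes "is_walk P vs"
  shows "walk_edges vs \<subseteq> Defs.Gamma P"
  using assms unfolding walk_edges_def Defs.Gamma_def is_walk_def by blast

lemma alternating_telescope:
  "(\<Sum>i<n. (-1::real) ^ i * (a i + a (Suc i))) = a 0 - (-1) ^ n * a n"
  by (induction n) (auto simp: algebra_simps)

(* The pointwise estimate behind the theorem: along a closed walk of odd length L
   from x, 2 v(x) is the alternating sum of the pair sums v(v_i) + v(v_{i+1}),
   so Cauchy-Schwarz bounds 4 v(x)^2 by L times the sum of their squares. *)
lemma odd_closed_walk_cauchy_schwarz:
  fixes v :: "'a \<Rightarrow> real"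
  assumes odd: "odd L" and start: "vs ! 0 = x" and stop: "vs ! L = x"
  shows "4 * (v x)^2 \<le> real L * (\<Sum>i<L. (v (vs ! i) + v (vs ! Suc i))^2)"
proof -
  define c where "c i = (-1::real) ^ i * (v (vs ! i) + v (vs ! Suc i))" for i
  have "(\<Sum>i<L. c i) = 2 * v x"
    using alternating_telescope[where n = L and a = "\<lambda>i. v (vs ! i)"] odd start stop by (simp add: c_def)
  then have "4 * (v x)^2 = (\<Sum>i<L. c i)^2" by (simp add: power2_eq_square)
  also have "\<dots> \<le> (\<Sum>i<L. (c i)^2) * real (card {..<L})"
    by (rule sum_squared_le_sum_of_squares)
  also have "\<dots> = real L * (\<Sum>i<L. (v (vs ! i) + v (vs ! Suc i))^2)"
    by (simp add: c_def power_mult_distrib power_even_eq[symmetric] mult.commute[of 2])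
  finally show ?thesis .
qed

(* A symmetric function of two vertices, read as a function of the unordered
   edge {a, b}. *)
definition sym_lift :: "('a \<Rightarrow> 'a \<Rightarrow> real) \<Rightarrow> 'a set \<Rightarrow> real" where
  "sym_lift f e = (SOME q. \<exists>a b. e = {a, b} \<and> q = f a b)"

lemma sym_lift_eq:
  assumes sym: "\<And>a b. f a b = f b a"
  shows "sym_lift f {a, b} = f a b"
  unfolding sym_lift_def
proof (rule some_equality)
  fix q assume "\<exists>c d. {a, b} = {c, d} \<and> q = f c d"
  then show "q = f a b" using sym by (auto simp: doubleton_eq_iff)
qed blast

(* By reversibility, Q({x,y}) = pi(x) P(x,y) does not depend on the orientation. *)
lemma Qedge_eq:
  assumes rev: "reversible P \<pi>" and pos: "P x y > 0"
  shows "Qedge P \<pi> {x, y} = \<pi> x * P x y"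
  unfolding Qedge_def
proof (rule some_equality)
  fix q assume "\<exists>a b. {x, y} = {a, b} \<and> P a b > 0 \<and> q = \<pi> a * P a b"
  then obtain a b where "{x, y} = {a, b}" "q = \<pi> a * P a b" by blast
  then show "q = \<pi> x * P x y" using rev unfolding reversible_def by (auto simp: doubleton_eq_iff)
qed (use pos in blast)

lemma Qedge_pos:
  assumes rev: "reversible P \<pi>" and pos: "\<forall>x. \<pi> x > 0" and e: "e \<in> Defs.Gamma P"
  shows "Qedge P \<pi> e > 0"
proof -
  obtain x y where "e = {x, y}" "P x y > 0" using e unfolding Defs.Gamma_def by auto
  then show ?thesis using Qedge_eq[OF rev] pos by simp
qed

lemma eta'_bound:
  assumes rev: "reversible P \<pi>" and pos: "\<forall>x. \<pi> x > 0" and e: "e \<in> Defs.Gamma P"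
  shows "(\<Sum>x\<in>{x. e \<in> walk_edges (\<sigma> x)}. \<pi> x) \<le> eta' P \<pi> \<sigma> * Qedge P \<pi> e"
proof -
  have "(\<Sum>x\<in>{x. e \<in> walk_edges (\<sigma> x)}. \<pi> x) / Qedge P \<pi> e \<le> eta' P \<pi> \<sigma>"
    unfolding eta'_def by (rule Max_ge) (use e in auto)
  then show ?thesis using Qedge_pos[OF rev pos e] by (simp add: divide_le_eq)
qed

lemma eta'_nonneg:
  assumes rev: "reversible P \<pi>" and pos: "\<forall>x. \<pi> x > 0" and e: "e \<in> Defs.Gamma P"
  shows "eta' P \<pi> \<sigma> \<ge> 0"
proof -
  have "0 \<le> (\<Sum>x\<in>{x. e \<in> walk_edges (\<sigma> x)}. \<pi> x)" using pos by (simp add: less_imp_le sum_nonneg)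
  also have "\<dots> \<le> eta' P \<pi> \<sigma> * Qedge P \<pi> e" by (rule eta'_bound[OF rev pos e])
  finally show ?thesis using Qedge_pos[OF rev pos e] by (simp add: zero_le_mult_iff)
qed

lemma sum_over_image_le:
  fixes h k :: "_ \<Rightarrow> real"
  assumes fin: "finite S" and nonneg: "\<And>p. p \<in> S \<Longrightarrow> 0 \<le> h p"
    and dominated: "\<And>p. p \<in> S \<Longrightarrow> k (g p) \<le> h p"
  shows "(\<Sum>e\<in>g ` S. k e) \<le> (\<Sum>p\<in>S. h p)"
proof -
  have "(\<Sum>e\<in>g ` S. k e) \<le> (\<Sum>e\<in>g ` S. \<Sum>p\<in>{p \<in> S. g p = e}. h p)"
  proof (rule sum_mono)
    fix e assume "e \<in> g ` S"
    then obtain p where p: "p \<in> S" "g p = e" by auto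
    then have "k e \<le> h p" using dominated by auto
    also have "\<dots> \<le> (\<Sum>p\<in>{p \<in> S. g p = e}. h p)"
      by (rule member_le_sum) (use p fin nonneg in auto)
    finally show "k e \<le> (\<Sum>p\<in>{p \<in> S. g p = e}. h p)" .
  qed
  also have "\<dots> = (\<Sum>p\<in>S. h p)" using sum.image_gen[OF fin, of h g] by simp
  finally show ?thesis .
qed

(* The sum over unordered edges of Q(e) f(e) is at most the sum over ordered
   pairs of pi(x) P(x,y) f(x,y), which counts every proper edge twice. *)
lemma edge_energy_le:
  fixes P :: "'a::finite \<Rightarrow> 'a \<Rightarrow> real"
  assumes P_nonneg: "\<forall>x y. 0 \<le> P x y" and rev: "reversible P \<pi>" and pi_nonneg: "\<forall>x. 0 \<le> \<pi> x"
    and sym: "\<And>a b. f a b = f b a" and f_nonneg: "\<And>a b. 0 \<le> f a b"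
  shows "(\<Sum>e\<in>Defs.Gamma P. Qedge P \<pi> e * sym_lift f e) \<le> (\<Sum>x\<in>UNIV. \<Sum>y\<in>UNIV. \<pi> x * P x y * f x y)"
proof -
  define S where "S = {(x, y). P x y > 0}"
  define h where "h = (\<lambda>(x, y). \<pi> x * P x y * f x y)"
  have Gamma: "Defs.Gamma P = (\<lambda>(x, y). {x, y}) ` S" unfolding S_def Defs.Gamma_def by auto
  have "(\<Sum>e\<in>Defs.Gamma P. Qedge P \<pi> e * sym_lift f e) \<le> (\<Sum>p\<in>S. h p)"
    unfolding Gamma
    by (rule sum_over_image_le)
       (use P_nonneg pi_nonneg f_nonneg in \<open>auto simp: S_def h_def Qedge_eq[OF rev] sym_lift_eq[OF sym] less_le\<close>)
  also have "\<dots> = (\<Sum>p\<in>UNIV. h p)"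
  proof (rule sum.mono_neutral_left)
    show "\<forall>p\<in>UNIV - S. h p = 0"
      using P_nonneg by (auto simp: S_def h_def less_le)
  qed auto
  also have "\<dots> = (\<Sum>x\<in>UNIV. \<Sum>y\<in>UNIV. \<pi> x * P x y * f x y)"
    by (simp add: sum.cartesian_product h_def)
  finally show ?thesis .
qed

lemma weighted_edge_sum_swap:
  fixes w :: "'a::finite \<Rightarrow> real"
  assumes "finite A" and "\<And>x. W x \<subseteq> A"
  shows "(\<Sum>x\<in>UNIV. w x * (\<Sum>e\<in>W x. F e)) = (\<Sum>e\<in>A. F e * (\<Sum>x\<in>{x. e \<in> W x}. w x))"
proof -
  have "(\<Sum>x\<in>UNIV. w x * (\<Sum>e\<in>W x. F e)) = (\<Sum>x\<in>UNIV. \<Sum>e\<in>{e. e \<in> A \<and> e \<in> W x}. w x * F e)"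
    using assms(2) by (auto simp: sum_distrib_left intro!: sum.cong)
  also have "\<dots> = (\<Sum>e\<in>A. \<Sum>x\<in>{x. x \<in> UNIV \<and> e \<in> W x}. w x * F e)"
    by (rule sum.swap_restrict) (simp_all add: assms(1))
  also have "\<dots> = (\<Sum>e\<in>A. F e * (\<Sum>x\<in>{x. e \<in> W x}. w x))"
    by (simp add: sum_distrib_left mult.commute)
  finally show ?thesis .
qed

lemma eigen_quadratic_identity:
  fixes P :: "'a::finite \<Rightarrow> 'a \<Rightarrow> real"
  assumes st: "stochastic P" and stat: "stationary P \<pi>"
    and eig: "\<forall>x. (\<Sum>y\<in>UNIV. P x y * v y) = \<mu> * v x"
  shows "(\<Sum>x\<in>UNIV. \<Sum>y\<in>UNIV. \<pi> x * P x y * (v x + v y)^2) = 2 * (1 + \<mu>) * (\<Sum>x\<in>UNIV. \<pi> x * (v x)^2)"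
proof -
  have expand: "\<pi> x * P x y * (v x + v y)^2 = \<pi> x * (v x)^2 * P x y + \<pi> x * P x y * (v y)^2
      + 2 * (\<pi> x * v x) * (P x y * v y)" for x y
    by (simp add: power2_eq_square algebra_simps)
  have rows: "(\<Sum>x\<in>UNIV. \<Sum>y\<in>UNIV. \<pi> x * (v x)^2 * P x y) = (\<Sum>x\<in>UNIV. \<pi> x * (v x)^2)"
    using st unfolding stochastic_def by (simp add: sum_distrib_left[symmetric])
  have columns: "(\<Sum>x\<in>UNIV. \<Sum>y\<in>UNIV. \<pi> x * P x y * (v y)^2) = (\<Sum>y\<in>UNIV. \<pi> y * (v y)^2)"
    using stat unfolding stationary_def by (subst sum.swap) (simp add: sum_distrib_right[symmetric])
  have "(\<Sum>x\<in>UNIV. \<Sum>y\<in>UNIV. 2 * (\<pi> x * v x) * (P x y * v y))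
      = (\<Sum>x\<in>UNIV. 2 * (\<pi> x * v x) * (\<Sum>y\<in>UNIV. P x y * v y))"
    by (simp add: sum_distrib_left)
  also have "\<dots> = 2 * \<mu> * (\<Sum>x\<in>UNIV. \<pi> x * (v x)^2)"
    using eig by (simp add: sum_distrib_left power2_eq_square algebra_simps)
  finally have cross: "(\<Sum>x\<in>UNIV. \<Sum>y\<in>UNIV. 2 * (\<pi> x * v x) * (P x y * v y))
      = 2 * \<mu> * (\<Sum>x\<in>UNIV. \<pi> x * (v x)^2)" .
  show ?thesis unfolding expand sum.distrib rows columns cross by (simp add: algebra_simps)
qed

lemma weighted_square_sum_pos:
  fixes v :: "'a::finite \<Rightarrow> real"
  assumes pos: "\<forall>x. \<pi> x > 0" and nz: "v \<noteq> (\<lambda>_. 0)"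
  shows "(\<Sum>x\<in>UNIV. \<pi> x * (v x)^2) > 0"
proof -
  obtain x where "v x \<noteq> 0" using nz by auto
  then have "0 < \<pi> x * (v x)^2" using pos by simp
  also have "\<dots> \<le> (\<Sum>x\<in>UNIV. \<pi> x * (v x)^2)"
    by (rule member_le_sum) (use pos in \<open>auto simp: less_imp_le\<close>)
  finally show ?thesis .
qed

(* Keeping only the diagonal terms of the quadratic identity: if every holding
   probability P(x,x) is at least p, then every eigenvalue satisfies 2 p <= 1 + mu. *)
lemma self_loop_eigenvalue_bound:
  fixes P :: "'a::finite \<Rightarrow> 'a \<Rightarrow> real"
  assumes st: "stochastic P" and stat: "stationary P \<pi>" and pos: "\<forall>x. \<pi> x > 0"
    and loops: "\<forall>x. p \<le> P x x" and mu: "\<mu> \<in> eigenvalues P"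
  shows "2 * p \<le> 1 + \<mu>"
proof -
  obtain v where nz: "v \<noteq> (\<lambda>_. 0)" and ev: "\<forall>x. (\<Sum>y\<in>UNIV. P x y * v y) = \<mu> * v x"
    using mu unfolding eigenvalues_def by auto
  have P_nonneg: "P a b \<ge> 0" for a b using st unfolding stochastic_def by auto
  define N where "N = (\<Sum>x\<in>UNIV. \<pi> x * (v x)^2)"
  have "2 * p * (2 * N) = (\<Sum>x\<in>UNIV. p * (\<pi> x * (v x + v x)^2))"
    unfolding N_def by (simp add: sum_distrib_left algebra_simps power2_eq_square)
  also have "\<dots> \<le> (\<Sum>x\<in>UNIV. \<pi> x * P x x * (v x + v x)^2)"
    by (rule sum_mono) (use loops pos in \<open>auto intro: mult_right_mono simp: less_imp_le algebra_simps\<close>)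
  also have "\<dots> \<le> (\<Sum>x\<in>UNIV. \<Sum>y\<in>UNIV. \<pi> x * P x y * (v x + v y)^2)"
  proof (rule sum_mono)
    fix x
    show "\<pi> x * P x x * (v x + v x)^2 \<le> (\<Sum>y\<in>UNIV. \<pi> x * P x y * (v x + v y)^2)"
      by (rule member_le_sum[where f = "\<lambda>y. \<pi> x * P x y * (v x + v y)^2"])
         (use pos P_nonneg in \<open>auto simp: less_imp_le\<close>)
  qed
  also have "\<dots> = (1 + \<mu>) * (2 * N)"
    unfolding N_def using eigen_quadratic_identity[OF st stat ev] by simp
  finally show ?thesis using weighted_square_sum_pos[OF pos nz] unfolding N_def by simp
qed

lemma eigenvalue_ge_minus_one:
  fixes P :: "'a::finite \<Rightarrow> 'a \<Rightarrow> real"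
  assumes st: "stochastic P" and stat: "stationary P \<pi>" and pos: "\<forall>x. \<pi> x > 0"
    and mu: "\<mu> \<in> eigenvalues P"
  shows "-1 \<le> \<mu>"
  using self_loop_eigenvalue_bound[OF st stat pos _ mu, of 0] st
  unfolding stochastic_def by simp

(* P is self-adjoint for the pi-weighted inner product, so eigenvectors for
   distinct eigenvalues are orthogonal. *)
lemma eigenvectors_orthogonal:
  fixes P :: "'a::finite \<Rightarrow> 'a \<Rightarrow> real"
  assumes rev: "reversible P \<pi>"
    and ev: "\<forall>x. (\<Sum>y\<in>UNIV. P x y * v y) = \<mu> * v x"
    and ew: "\<forall>x. (\<Sum>y\<in>UNIV. P x y * w y) = \<nu> * w x"
    and ne: "\<mu> \<noteq> \<nu>"
  shows "(\<Sum>x\<in>UNIV. \<pi> x * v x * w x) = 0"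
proof -
  have "\<mu> * (\<Sum>x\<in>UNIV. \<pi> x * v x * w x) = (\<Sum>x\<in>UNIV. \<pi> x * w x * (\<Sum>y\<in>UNIV. P x y * v y))"
    using ev by (simp add: sum_distrib_left algebra_simps)
  also have "\<dots> = (\<Sum>x\<in>UNIV. \<Sum>y\<in>UNIV. (\<pi> x * P x y) * w x * v y)"
    by (simp add: sum_distrib_left algebra_simps)
  also have "\<dots> = (\<Sum>x\<in>UNIV. \<Sum>y\<in>UNIV. (\<pi> y * P y x) * w x * v y)"
    using rev unfolding reversible_def by simp
  also have "\<dots> = (\<Sum>y\<in>UNIV. \<pi> y * v y * (\<Sum>x\<in>UNIV. P y x * w x))"
    by (subst sum.swap) (simp add: sum_distrib_left algebra_simps)
  also have "\<dots> = \<nu> * (\<Sum>x\<in>UNIV. \<pi> x * v x * w x)"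
    using ew by (simp add: sum_distrib_left algebra_simps)
  finally show ?thesis using ne by simp
qed

(* Consequently there are finitely many eigenvalues: rescaled by sqrt pi, chosen
   eigenvectors form an orthogonal, hence independent, family in real^'a. *)
lemma finite_eigenvalues:
  fixes P :: "'a::finite \<Rightarrow> 'a \<Rightarrow> real"
  assumes rev: "reversible P \<pi>" and pos: "\<forall>x. \<pi> x > 0"
  shows "finite (eigenvalues P)"
proof -
  define E where "E = eigenvalues P"
  define V where "V \<mu> = (SOME v. v \<noteq> (\<lambda>_. 0) \<and> (\<forall>x. (\<Sum>y\<in>UNIV. P x y * v y) = \<mu> * v x))" for \<mu>
  have V: "V \<mu> \<noteq> (\<lambda>_. 0) \<and> (\<forall>x. (\<Sum>y\<in>UNIV. P x y * V \<mu> y) = \<mu> * V \<mu> x)" if "\<mu> \<in> E" for \<mu>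
  proof -
    have "\<exists>v. v \<noteq> (\<lambda>_. 0) \<and> (\<forall>x. (\<Sum>y\<in>UNIV. P x y * v y) = \<mu> * v x)"
      using that unfolding E_def eigenvalues_def by blast
    then show ?thesis unfolding V_def by (rule someI_ex)
  qed
  define W :: "real \<Rightarrow> real^'a" where "W \<mu> = (\<chi> i. sqrt (\<pi> i) * V \<mu> i)" for \<mu>
  have inner: "W \<mu> \<bullet> W \<nu> = (\<Sum>x\<in>UNIV. \<pi> x * V \<mu> x * V \<nu> x)" for \<mu> \<nu>
    unfolding W_def inner_vec_def using pos
    by (intro sum.cong) (auto simp: algebra_simps less_imp_le)
  have orth: "W \<mu> \<bullet> W \<nu> = 0" if "\<mu> \<in> E" "\<nu> \<in> E" "\<mu> \<noteq> \<nu>" for \<mu> \<nu>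
    unfolding inner using eigenvectors_orthogonal[OF rev] V[OF that(1)] V[OF that(2)] that(3) by blast
  have nz: "W \<mu> \<noteq> 0" if "\<mu> \<in> E" for \<mu>
  proof -
    have "0 < (\<Sum>x\<in>UNIV. \<pi> x * (V \<mu> x)^2)" using weighted_square_sum_pos[OF pos] V[OF that] by blast
    then show ?thesis using inner[of \<mu> \<mu>] by (auto simp: power2_eq_square mult.assoc)
  qed
  have "inj_on W E"
    by (rule inj_onI) (use orth nz in \<open>fastforce\<close>)
  moreover have "independent (W ` E)"
    by (rule pairwise_orthogonal_independent) (use orth nz in \<open>auto simp: pairwise_def orthogonal_def\<close>)
  ultimately show ?thesis unfolding E_def by (metis finiteI_independent finite_imageD)
qed

lemma lambda_min_eigenvalue:
  fixes P :: "'a::finite \<Rightarrow> 'a \<Rightarrow> real"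
  assumes st: "stochastic P" and rev: "reversible P \<pi>" and pos: "\<forall>x. \<pi> x > 0"
  shows "lambda_min P \<in> eigenvalues P"
proof -
  have "1 \<in> eigenvalues P"
    using st unfolding eigenvalues_def stochastic_def by (auto intro!: exI[where x = "\<lambda>_. 1"] simp: fun_eq_iff)
  then show ?thesis unfolding lambda_min_def using finite_eigenvalues[OF rev pos] by (intro Min_in) auto
qed

(* Integrating the Cauchy-Schwarz bound against pi gives
   4 ||v||^2 <= ell * sum_x pi(x) sum_{e in sigma_x} D(e), where D{a,b} = (v a + v b)^2;
   exchanging the sums and using the congestion bound turns the right-hand side
   into ell * eta' * sum_e Q(e) D(e) <= ell * eta' * 2 (1 + mu) ||v||^2. *)
lemma odd_cycle_eigenvalue_bound:
  fixes P :: "'a::finite \<Rightarrow> 'a \<Rightarrow> real" and \<sigma> :: "'a \<Rightarrow> 'a list"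
  assumes st: "stochastic P" and stat: "stationary P \<pi>" and rev: "reversible P \<pi>"
    and pos: "\<forall>x. \<pi> x > 0"
    and cyc: "\<forall>x. is_cycle_at P x (\<sigma> x) \<and> odd (walk_len (\<sigma> x))"
    and mu: "\<mu> \<in> eigenvalues P"
  shows "2 \<le> real (ell \<sigma>) * eta' P \<pi> \<sigma> * (1 + \<mu>)"
proof -
  obtain v where nz: "v \<noteq> (\<lambda>_. 0)" and ev: "\<forall>x. (\<Sum>y\<in>UNIV. P x y * v y) = \<mu> * v x"
    using mu unfolding eigenvalues_def by auto
  define N where "N = (\<Sum>x\<in>UNIV. \<pi> x * (v x)^2)"
  define D where "D = sym_lift (\<lambda>a b. (v a + v b)^2)"
  define W where "W x = walk_edges (\<sigma> x)" for x
  define l where "l = real (ell \<sigma>)"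
  define \<eta> where "\<eta> = eta' P \<pi> \<sigma>"
  define \<Gamma> where "\<Gamma> = Defs.Gamma P"
  have D_edge: "D {a, b} = (v a + v b)^2" for a b
    unfolding D_def by (rule sym_lift_eq) (simp add: add.commute)
  have D_nonneg: "0 \<le> D e" if "e \<in> \<Gamma>" for e
    using that D_edge unfolding \<Gamma>_def Defs.Gamma_def by auto
  have W_Gamma: "W x \<subseteq> \<Gamma>" for x
    using cyc walk_edges_subset_Gamma unfolding W_def \<Gamma>_def is_cycle_at_def by blast
  have l_nonneg: "0 \<le> l" unfolding l_def by simp
  have first_edge: "{\<sigma> x ! 0, \<sigma> x ! Suc 0} \<in> W x" for x
  proof -
    have "2 \<le> length (\<sigma> x)" using cyc unfolding is_cycle_at_def by blast
    then have "Suc 0 < length (\<sigma> x)" by simp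
    then show ?thesis unfolding W_def walk_edges_def by blast
  qed
  have \<eta>_nonneg: "0 \<le> \<eta>"
    unfolding \<eta>_def using eta'_nonneg[OF rev pos] first_edge W_Gamma unfolding \<Gamma>_def by blast
  have per_vertex: "4 * (v x)^2 \<le> l * (\<Sum>e\<in>W x. D e)" for x
  proof -
    have c: "is_cycle_at P x (\<sigma> x)" and odd: "odd (walk_len (\<sigma> x))" using cyc by auto
    note ends = cycle_at_endpoints[OF c]
    have "4 * (v x)^2 \<le> real (walk_len (\<sigma> x)) * (\<Sum>i<walk_len (\<sigma> x). D {\<sigma> x ! i, \<sigma> x ! Suc i})"
      using odd_closed_walk_cauchy_schwarz[OF odd ends(2,3), of v] by (simp add: D_edge)
    also have "\<dots> = real (walk_len (\<sigma> x)) * (\<Sum>e\<in>W x. D e)"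
      unfolding W_def using odd_cycle_edge_sum[OF c odd, of D] by simp
    also have "\<dots> \<le> l * (\<Sum>e\<in>W x. D e)"
    proof (rule mult_right_mono)
      show "real (walk_len (\<sigma> x)) \<le> l" unfolding l_def ell_def by simp
      show "0 \<le> (\<Sum>e\<in>W x. D e)" using W_Gamma D_nonneg by (meson subsetD sum_nonneg)
    qed
    finally show ?thesis .
  qed
  have "4 * N = (\<Sum>x\<in>UNIV. \<pi> x * (4 * (v x)^2))"
    unfolding N_def by (simp add: sum_distrib_left algebra_simps)
  also have "\<dots> \<le> (\<Sum>x\<in>UNIV. \<pi> x * (l * (\<Sum>e\<in>W x. D e)))"
    by (rule sum_mono) (use per_vertex pos in \<open>auto intro: mult_left_mono simp: less_imp_le\<close>)
  also have "\<dots> = l * (\<Sum>x\<in>UNIV. \<pi> x * (\<Sum>e\<in>W x. D e))"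
    by (simp add: sum_distrib_left algebra_simps)
  also have "\<dots> = l * (\<Sum>e\<in>\<Gamma>. D e * (\<Sum>x\<in>{x. e \<in> W x}. \<pi> x))"
    using weighted_edge_sum_swap[of \<Gamma> W \<pi> D] W_Gamma by (simp add: \<Gamma>_def)
  also have "\<dots> \<le> l * (\<Sum>e\<in>\<Gamma>. D e * (\<eta> * Qedge P \<pi> e))"
    using eta'_bound[OF rev pos] D_nonneg l_nonneg
    by (auto simp: \<eta>_def W_def \<Gamma>_def intro!: mult_left_mono sum_mono)
  also have "\<dots> = l * \<eta> * (\<Sum>e\<in>\<Gamma>. Qedge P \<pi> e * D e)"
    by (simp add: sum_distrib_left algebra_simps)
  also have "\<dots> \<le> l * \<eta> * (2 * (1 + \<mu>) * N)"
  proof (rule mult_left_mono)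
    have "(\<Sum>e\<in>\<Gamma>. Qedge P \<pi> e * D e) \<le> (\<Sum>x\<in>UNIV. \<Sum>y\<in>UNIV. \<pi> x * P x y * (v x + v y)^2)"
      unfolding \<Gamma>_def D_def
      by (rule edge_energy_le[OF _ rev]) (use st pos in \<open>auto simp: stochastic_def less_imp_le add.commute\<close>)
    then show "(\<Sum>e\<in>\<Gamma>. Qedge P \<pi> e * D e) \<le> 2 * (1 + \<mu>) * N"
      unfolding N_def using eigen_quadratic_identity[OF st stat ev] by simp
  qed (use l_nonneg \<eta>_nonneg in simp)
  finally have "2 * N \<le> (l * \<eta> * (1 + \<mu>)) * N" by (simp add: algebra_simps)
  then show ?thesis using weighted_square_sum_pos[OF pos nz] unfolding N_def l_def \<eta>_def by simp
qed

lemma unit_cycles_are_self_loops: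
  fixes \<sigma> :: "'a::finite \<Rightarrow> 'a list"
  assumes cyc: "\<forall>x. is_cycle_at P x (\<sigma> x) \<and> odd (walk_len (\<sigma> x))" and unit: "ell \<sigma> = 1"
  shows "P x x > 0"
proof -
  have c: "is_cycle_at P x (\<sigma> x)" and odd: "odd (walk_len (\<sigma> x))" using cyc by auto
  have "walk_len (\<sigma> x) \<le> ell \<sigma>" unfolding ell_def by simp
  then have one: "walk_len (\<sigma> x) = 1" using odd unit by (cases "walk_len (\<sigma> x)") auto
  note ends = cycle_at_endpoints[OF c]
  have "P (\<sigma> x ! 0) (\<sigma> x ! Suc 0) > 0"
    using c ends(1) one unfolding is_cycle_at_def is_walk_def by auto
  then show ?thesis using ends(2,3) one by simp
qed

(* The self-loop case of the theorem, from the diagonal bound with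
   p = min_x P(x,x). *)
lemma self_loop_inverse_bound:
  fixes P :: "'a::finite \<Rightarrow> 'a \<Rightarrow> real"
  assumes st: "stochastic P" and stat: "stationary P \<pi>" and pos: "\<forall>x. \<pi> x > 0"
    and loops: "\<And>x. P x x > 0" and mu: "\<mu> \<in> eigenvalues P"
  shows "inverse (1 + \<mu>) \<le> (1/2) * Max (range (\<lambda>x. inverse (P x x)))"
proof -
  define p where "p = Min (range (\<lambda>x. P x x))"
  have "p \<in> range (\<lambda>x. P x x)" unfolding p_def by (rule Min_in) auto
  then obtain x0 where x0: "p = P x0 x0" by auto
  have "2 * p \<le> 1 + \<mu>"
    by (rule self_loop_eigenvalue_bound[OF st stat pos _ mu]) (simp add: p_def)
  then have "inverse (1 + \<mu>) \<le> inverse (2 * p)"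
    using x0 loops by (intro le_imp_inverse_le) auto
  also have "\<dots> = (1/2) * inverse (P x0 x0)" using x0 by simp
  also have "\<dots> \<le> (1/2) * Max (range (\<lambda>x. inverse (P x x)))" by simp
  finally show ?thesis .
qed

theorem mainTheorem3:
  fixes P :: "'a::finite \<Rightarrow> 'a \<Rightarrow> real" and \<pi> :: "'a \<Rightarrow> real" and \<sigma> :: "'a \<Rightarrow> 'a list"
  assumes "stochastic P"
    and "prob_dist \<pi>" and "\<forall>x. \<pi> x > 0"
    and "stationary P \<pi>"
    and "reversible P \<pi>"
    and "ergodic_chain P"
    and "\<forall>x. is_cycle_at P x (\<sigma> x) \<and> odd (walk_len (\<sigma> x))"
  shows "inverse (1 + lambda_min P) \<le> eta' P \<pi> \<sigma> * real (ell \<sigma>) / 2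
    \<and> (ell \<sigma> = 1 \<longrightarrow> inverse (1 + lambda_min P) \<le> (1/2) * Max (range (\<lambda>x. inverse (P x x))))"
proof -
  note st = assms(1) and pos = assms(3) and stat = assms(4) and rev = assms(5) and cyc = assms(7)
  have lm: "lambda_min P \<in> eigenvalues P" by (rule lambda_min_eigenvalue[OF st rev pos])
  have spectral: "2 \<le> real (ell \<sigma>) * eta' P \<pi> \<sigma> * (1 + lambda_min P)"
    by (rule odd_cycle_eigenvalue_bound[OF st stat rev pos cyc lm])
  moreover have "-1 \<le> lambda_min P" by (rule eigenvalue_ge_minus_one[OF st stat pos lm])
  ultimately have gap_pos: "0 < 1 + lambda_min P" by (cases "lambda_min P = -1") auto
  have "inverse (1 + lambda_min P) \<le> eta' P \<pi> \<sigma> * real (ell \<sigma>) / 2"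
    using spectral gap_pos by (simp add: field_simps)
  moreover have "inverse (1 + lambda_min P) \<le> (1/2) * Max (range (\<lambda>x. inverse (P x x)))"
    if "ell \<sigma> = 1"
    using self_loop_inverse_bound[OF st stat pos unit_cycles_are_self_loops[OF cyc that] lm] .
  ultimately show ?thesis by blast
qed

end
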